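(* Let $\phi:\Delta\to\mathbb R$ be continuous. Then the function $g:\Delta\to\mathbb R$ given by $g(x)=\max_{y\in\Delta,\,y\trianglerighteq x}\phi(y)$ is continuous.
   Context: Fix $\theta\in\{2,3,\dots\}$. $\Delta=\{x\in[0,1]^\theta:x_1\ge\dots\ge x_\theta,\ \sum_i x_i=1\}$. For $x,y\in\Delta$, $y\trianglerighteq x$ means $y_1+\dots+y_i\ge x_1+\dots+x_i$ for all $i$. *)

theory Defs
  imports "HOL-Analysis.Analysis"
begin

text \<open>Points of the ordered simplex are represented as functions nat => real
  (coordinates x 0, ..., x (theta-1)), vanishing outside {0..<theta}, so that the
  product topology on nat => real restricted to Delta is the Euclidean one.\<close>

definition ordsimplex :: "nat \<Rightarrow> (nat \<Rightarrow> real) set" where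
  "ordsimplex \<theta> = {x. (\<forall>i. i \<ge> \<theta> \<longrightarrow> x i = 0)
      \<and> (\<forall>i<\<theta>. 0 \<le> x i \<and> x i \<le> 1)
      \<and> (\<forall>i j. i \<le> j \<and> j < \<theta> \<longrightarrow> x j \<le> x i)
      \<and> (\<Sum>i<\<theta>. x i) = 1}"

definition majorizes :: "nat \<Rightarrow> (nat \<Rightarrow> real) \<Rightarrow> (nat \<Rightarrow> real) \<Rightarrow> bool" where
  "majorizes \<theta> y x \<longleftrightarrow> (\<forall>i\<in>{1..\<theta>}. (\<Sum>k<i. x k) \<le> (\<Sum>k<i. y k))"

end

theory Submission
  imports Defs
begin

text \<open>The maximum \<open>g\<close> is attained by compactness. Its superlevel sets are projections of
  compact sets, hence closed, so \<open>g\<close> is upper semicontinuous. For lower semicontinuity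
  take a maximizer \<open>y\<close> for \<open>x\<close>: raising all partial sums of \<open>y\<close> by the distance
  \<open>e\<close> between the partial sums of \<open>x'\<close> and \<open>x\<close> (capped at \<open>1\<close>) yields a point of the
  simplex majorizing \<open>x'\<close> that depends continuously on \<open>e\<close> and equals \<open>y\<close> at \<open>e = 0\<close>;
  so \<open>g x' \<ge> \<phi>(raised y) \<rightarrow> \<phi> y = g x\<close>.\<close>

lemma attains_Greatest_image:
  fixes \<phi> :: "'a::topological_space \<Rightarrow> real"
  assumes "compact K" "K \<noteq> {}" "continuous_on K \<phi>"
  obtains y where "y \<in> K" "\<And>z. z \<in> K \<Longrightarrow> \<phi> z \<le> \<phi> y" "(GREATEST v. v \<in> \<phi> ` K) = \<phi> y"
proof -
  obtain y where y: "y \<in> K" "\<forall>z\<in>K. \<phi> z \<le> \<phi> y"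
    using continuous_attains_sup[OF assms] by blast
  moreover have "(GREATEST v. v \<in> \<phi> ` K) = \<phi> y"
    by (rule Greatest_equality) (use y in auto)
  ultimately show thesis using that by blast
qed

lemma closed_projection_superlevel:
  fixes R :: "('a::t2_space \<times> 'b::t2_space) set" and \<phi> :: "'b \<Rightarrow> real"
  assumes "compact A" "compact K" "closed R" "continuous_on K \<phi>"
  shows "closed {x \<in> A. \<exists>y\<in>K. (x, y) \<in> R \<and> c \<le> \<phi> y}"
proof -
  have "closed (K \<inter> \<phi> -` {c..})"
    using assms(2,4) by (intro continuous_closed_preimage) (auto intro: compact_imp_closed)
  then have "compact (K \<inter> \<phi> -` {c..})"
    using compact_Int_closed[OF assms(2), of "K \<inter> \<phi> -` {c..}"] by (simp add: Int_left_absorb)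
  then have "compact ((A \<times> (K \<inter> \<phi> -` {c..})) \<inter> R)"
    using compact_Int_closed compact_Times assms(1,3) by blast
  then have "compact (fst ` ((A \<times> (K \<inter> \<phi> -` {c..})) \<inter> R))"
    by (rule compact_continuous_image[OF continuous_on_fst[OF continuous_on_id]])
  moreover have "fst ` ((A \<times> (K \<inter> \<phi> -` {c..})) \<inter> R) = {x \<in> A. \<exists>y\<in>K. (x, y) \<in> R \<and> c \<le> \<phi> y}"
    by force
  ultimately show ?thesis by (metis compact_imp_closed)
qed

lemma eventually_less_if_closed_superlevel:
  fixes g :: "'a::topological_space \<Rightarrow> 'b::linorder"
  assumes "closed {x \<in> A. a \<le> g x}" "g x < a"
  shows "eventually (\<lambda>x'. g x' < a) (at x within A)"
proof -
  have "eventually (\<lambda>x'. x' \<in> - {x \<in> A. a \<le> g x}) (nhds x)"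
    using assms by (intro eventually_nhds_in_open) auto
  then show ?thesis
    unfolding eventually_at_filter by (rule eventually_mono) auto
qed

lemma continuous_on_psum: "continuous_on UNIV (\<lambda>x::nat \<Rightarrow> real. \<Sum>k<i. x k)"
  by (intro continuous_intros continuous_on_product_coordinates)

lemma closed_ordsimplex: "closed (ordsimplex \<theta>)"
  unfolding ordsimplex_def
  by (intro closed_Collect_conj closed_Collect_all closed_Collect_imp closed_Collect_le
      closed_Collect_eq continuous_intros continuous_on_product_coordinates continuous_on_psum) auto

lemma compact_ordsimplex: "compact (ordsimplex \<theta>)"
proof -
  have "compactin (product_topology (\<lambda>_. euclidean) UNIV) (PiE UNIV (\<lambda>_::nat. {0..1::real}))"
    by (simp add: compactin_PiE)
  then have "compact (Pi UNIV (\<lambda>_::nat. {0..1::real}))"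
    by (simp add: euclidean_product_topology PiE_def extensional_def)
  moreover have "ordsimplex \<theta> = Pi UNIV (\<lambda>_. {0..1}) \<inter> ordsimplex \<theta>"
    by (auto simp: ordsimplex_def) (metis linorder_not_le order_refl zero_le_one)+
  ultimately show ?thesis
    using closed_ordsimplex by (metis compact_Int_closed)
qed

lemma ordsimplex_nonneg: "x \<in> ordsimplex \<theta> \<Longrightarrow> 0 \<le> x k"
  unfolding ordsimplex_def by (cases "k < \<theta>") auto

lemma ordsimplex_psum_eq_1:
  assumes x: "x \<in> ordsimplex \<theta>" and "\<theta> \<le> i"
  shows "(\<Sum>k<i. x k) = 1"
proof -
  have "(\<Sum>k<i. x k) = (\<Sum>k<\<theta>. x k) + (\<Sum>k\<in>{\<theta>..<i}. x k)"
    using \<open>\<theta> \<le> i\<close> by (metis atLeast0LessThan sum.atLeastLessThan_concat zero_le)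
  also have "(\<Sum>k\<in>{\<theta>..<i}. x k) = 0"
    using x by (auto simp: ordsimplex_def)
  finally show ?thesis
    using x by (simp add: ordsimplex_def)
qed

lemma ordsimplex_psum_le_1:
  assumes x: "x \<in> ordsimplex \<theta>"
  shows "(\<Sum>k<i. x k) \<le> 1"
proof (cases "\<theta> \<le> i")
  case False
  then have "(\<Sum>k<i. x k) \<le> (\<Sum>k<\<theta>. x k)"
    by (intro sum_mono2) (auto simp: ordsimplex_nonneg[OF x])
  then show ?thesis
    using ordsimplex_psum_eq_1[OF x, of \<theta>] by simp
qed (simp add: ordsimplex_psum_eq_1[OF x])

lemma ordsimplex_psum_nonneg: "x \<in> ordsimplex \<theta> \<Longrightarrow> 0 \<le> (\<Sum>k<i. x k)"
  by (simp add: ordsimplex_nonneg sum_nonneg)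

lemma ordsimplex_dim_pos: "x \<in> ordsimplex \<theta> \<Longrightarrow> 0 < \<theta>"
  by (cases \<theta>) (auto simp: ordsimplex_def)

lemma closed_majorizes_pairs: "closed {p. majorizes \<theta> (snd p) (fst p)}"
  unfolding majorizes_def Ball_def
  by (intro closed_Collect_all closed_Collect_imp closed_Collect_le continuous_intros
      continuous_on_compose2[OF continuous_on_psum]) auto

lemma closed_majorizes: "closed {y. majorizes \<theta> y x}"
  unfolding majorizes_def Ball_def
  by (intro closed_Collect_all closed_Collect_imp closed_Collect_le continuous_intros
      continuous_on_psum) auto

definition raised_psum :: "(nat \<Rightarrow> real) \<Rightarrow> real \<Rightarrow> nat \<Rightarrow> real" where
  "raised_psum y e i = (if i = 0 then 0 else min 1 ((\<Sum>k<i. y k) + e))"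

definition raise :: "nat \<Rightarrow> (nat \<Rightarrow> real) \<Rightarrow> real \<Rightarrow> nat \<Rightarrow> real" where
  "raise \<theta> y e k = (if k < \<theta> then raised_psum y e (Suc k) - raised_psum y e k else 0)"

lemma psum_raise: "i \<le> \<theta> \<Longrightarrow> (\<Sum>k<i. raise \<theta> y e k) = raised_psum y e i"
proof -
  assume "i \<le> \<theta>"
  then have "(\<Sum>k<i. raise \<theta> y e k) = (\<Sum>k<i. raised_psum y e (Suc k) - raised_psum y e k)"
    by (intro sum.cong) (auto simp: raise_def)
  also have "\<dots> = raised_psum y e i - raised_psum y e 0"
    by (rule sum_lessThan_telescope)
  finally show ?thesis
    by (simp add: raised_psum_def)
qed

lemma raise_antimono_step:
  assumes y: "y \<in> ordsimplex \<theta>" and e: "0 \<le> e" and k: "Suc k < \<theta>"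
  shows "raise \<theta> y e (Suc k) \<le> raise \<theta> y e k"
proof -
  have ord: "y (Suc k) \<le> y k" using y k unfolding ordsimplex_def by auto
  have nn: "0 \<le> y (Suc k)" "0 \<le> y k" using ordsimplex_nonneg[OF y] by auto
  define a where "a = (\<Sum>j<k. y j)"
  have "0 \<le> a" unfolding a_def using ordsimplex_psum_nonneg[OF y] .
  moreover have "a + y k \<le> 1"
    using ordsimplex_psum_le_1[OF y, of "Suc k"] by (simp add: a_def)
  moreover have "k = 0 \<Longrightarrow> a = 0" by (simp add: a_def)
  ultimately show ?thesis
    using k ord nn e by (cases k) (auto simp: raise_def raised_psum_def min_def a_def)
qed

lemma raise_in_ordsimplex:
  assumes y: "y \<in> ordsimplex \<theta>" and e: "0 \<le> e"
  shows "raise \<theta> y e \<in> ordsimplex \<theta>"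
proof -
  have "0 \<le> raise \<theta> y e k" for k
    using ordsimplex_nonneg[OF y, of k] ordsimplex_psum_nonneg[OF y, of k] e
    by (auto simp: raise_def raised_psum_def)
  moreover have "raise \<theta> y e k \<le> 1" for k
    using ordsimplex_psum_nonneg[OF y, of k] e by (auto simp: raise_def raised_psum_def)
  moreover have "i \<le> j \<Longrightarrow> j < \<theta> \<longrightarrow> raise \<theta> y e j \<le> raise \<theta> y e i" for i j
  proof (induction j rule: dec_induct)
    case (step n)
    then show ?case using raise_antimono_step[OF y e, of n] by auto
  qed simp
  moreover have "(\<Sum>k<\<theta>. raise \<theta> y e k) = 1"
    using psum_raise[of \<theta> \<theta> y e] ordsimplex_psum_eq_1[OF y, of \<theta>] ordsimplex_dim_pos[OF y] e
    by (simp add: raised_psum_def)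
  moreover have "\<theta> \<le> i \<Longrightarrow> raise \<theta> y e i = 0" for i
    by (simp add: raise_def)
  ultimately show ?thesis
    unfolding ordsimplex_def by auto
qed

lemma raise_zero:
  assumes y: "y \<in> ordsimplex \<theta>"
  shows "raise \<theta> y 0 = y"
proof -
  have "raised_psum y 0 i = (\<Sum>k<i. y k)" for i
    using ordsimplex_psum_le_1[OF y, of i] by (simp add: raised_psum_def)
  then show ?thesis
    using y by (auto simp: fun_eq_iff raise_def ordsimplex_def)
qed

lemma majorizes_raise:
  assumes x: "x \<in> ordsimplex \<theta>"
    and "\<And>i. i \<in> {1..\<theta>} \<Longrightarrow> (\<Sum>k<i. x k) \<le> (\<Sum>k<i. y k) + e"
  shows "majorizes \<theta> (raise \<theta> y e) x"
  using assms ordsimplex_psum_le_1[OF x] by (simp add: majorizes_def psum_raise raised_psum_def)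

lemma continuous_on_raise: "continuous_on UNIV (raise \<theta> y)"
proof (intro continuous_on_coordinatewise_then_product)
  show "continuous_on UNIV (\<lambda>e. raise \<theta> y e k)" for k
    unfolding raise_def raised_psum_def
    by (cases "k < \<theta>"; cases "k = 0") (auto intro!: continuous_intros)
qed

definition majorant_max :: "nat \<Rightarrow> ((nat \<Rightarrow> real) \<Rightarrow> real) \<Rightarrow> (nat \<Rightarrow> real) \<Rightarrow> real" where
  "majorant_max \<theta> \<phi> x = (GREATEST v. v \<in> \<phi> ` {y \<in> ordsimplex \<theta>. majorizes \<theta> y x})"

lemma majorant_max_attained:
  assumes \<phi>: "continuous_on (ordsimplex \<theta>) \<phi>" and x: "x \<in> ordsimplex \<theta>"
  obtains y where "y \<in> ordsimplex \<theta>" "majorizes \<theta> y x" "majorant_max \<theta> \<phi> x = \<phi> y"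
    "\<And>z. z \<in> ordsimplex \<theta> \<Longrightarrow> majorizes \<theta> z x \<Longrightarrow> \<phi> z \<le> \<phi> y"
proof -
  let ?M = "{y \<in> ordsimplex \<theta>. majorizes \<theta> y x}"
  have "compact ?M"
    using compact_Int_closed[OF compact_ordsimplex closed_majorizes] by (simp add: Collect_conj_eq)
  moreover have "x \<in> ?M" using x by (auto simp: majorizes_def)
  moreover have "continuous_on ?M \<phi>" using \<phi> by (rule continuous_on_subset) auto
  ultimately obtain y where y: "y \<in> ?M" "\<And>z. z \<in> ?M \<Longrightarrow> \<phi> z \<le> \<phi> y"
    "(GREATEST v. v \<in> \<phi> ` ?M) = \<phi> y"
    using attains_Greatest_image by blast
  from y show thesis
    by (intro that) (auto simp: majorant_max_def)
qed

lemma majorant_max_ge: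
  assumes \<phi>: "continuous_on (ordsimplex \<theta>) \<phi>" and x: "x \<in> ordsimplex \<theta>"
    and "z \<in> ordsimplex \<theta>" "majorizes \<theta> z x"
  shows "\<phi> z \<le> majorant_max \<theta> \<phi> x"
  by (rule majorant_max_attained[OF \<phi> x]) (use assms(3,4) in simp)

lemma closed_superlevel_majorant_max:
  assumes \<phi>: "continuous_on (ordsimplex \<theta>) \<phi>"
  shows "closed {x \<in> ordsimplex \<theta>. c \<le> majorant_max \<theta> \<phi> x}"
proof -
  let ?R = "{p. majorizes \<theta> (snd p) (fst p)}"
  have "c \<le> majorant_max \<theta> \<phi> x \<longleftrightarrow> (\<exists>y\<in>ordsimplex \<theta>. (x, y) \<in> ?R \<and> c \<le> \<phi> y)"
    if x: "x \<in> ordsimplex \<theta>" for x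
  proof
    assume "c \<le> majorant_max \<theta> \<phi> x"
    moreover obtain y where "y \<in> ordsimplex \<theta>" "majorizes \<theta> y x" "majorant_max \<theta> \<phi> x = \<phi> y"
      using majorant_max_attained[OF \<phi> x] by blast
    ultimately show "\<exists>y\<in>ordsimplex \<theta>. (x, y) \<in> ?R \<and> c \<le> \<phi> y" by auto
  next
    assume "\<exists>y\<in>ordsimplex \<theta>. (x, y) \<in> ?R \<and> c \<le> \<phi> y"
    then show "c \<le> majorant_max \<theta> \<phi> x"
      using majorant_max_ge[OF \<phi> x] by force
  qed
  then have "{x \<in> ordsimplex \<theta>. c \<le> majorant_max \<theta> \<phi> x}
      = {x \<in> ordsimplex \<theta>. \<exists>y\<in>ordsimplex \<theta>. (x, y) \<in> ?R \<and> c \<le> \<phi> y}"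
    by blast
  then show ?thesis
    using closed_projection_superlevel[OF compact_ordsimplex compact_ordsimplex closed_majorizes_pairs \<phi>]
    by simp
qed

lemma eventually_greater_majorant_max:
  assumes \<phi>: "continuous_on (ordsimplex \<theta>) \<phi>" and x: "x \<in> ordsimplex \<theta>"
    and a: "a < majorant_max \<theta> \<phi> x"
  shows "eventually (\<lambda>x'. a < majorant_max \<theta> \<phi> x') (at x within ordsimplex \<theta>)"
proof -
  let ?D = "ordsimplex \<theta>"
  obtain y where y: "y \<in> ?D" "majorizes \<theta> y x" "majorant_max \<theta> \<phi> x = \<phi> y"
    using majorant_max_attained[OF \<phi> x] by blast
  define e where "e x' = (\<Sum>i<Suc \<theta>. \<bar>(\<Sum>k<i. x' k) - (\<Sum>k<i. x k)\<bar>)" for x'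
  have e_nonneg: "0 \<le> e x'" for x'
    unfolding e_def by (simp add: sum_nonneg)
  have "continuous_on UNIV e"
    unfolding e_def by (intro continuous_intros continuous_on_psum)
  then have "continuous_on ?D (\<lambda>x'. raise \<theta> y (e x'))"
    by (rule continuous_on_compose2[OF continuous_on_raise continuous_on_subset]) auto
  then have "continuous_on ?D (\<lambda>x'. \<phi> (raise \<theta> y (e x')))"
    by (rule continuous_on_compose2[OF \<phi>]) (auto intro: raise_in_ordsimplex[OF y(1) e_nonneg])
  moreover have "\<phi> (raise \<theta> y (e x)) = majorant_max \<theta> \<phi> x"
    using raise_zero[OF y(1)] y(3) by (simp add: e_def)
  ultimately have close: "eventually (\<lambda>x'. a < \<phi> (raise \<theta> y (e x'))) (at x within ?D)"
    using x a unfolding continuous_on_def by (metis order_tendstoD(1))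
  have le_max: "\<phi> (raise \<theta> y (e x')) \<le> majorant_max \<theta> \<phi> x'" if x': "x' \<in> ?D" for x'
  proof (intro majorant_max_ge[OF \<phi> x'] raise_in_ordsimplex[OF y(1) e_nonneg] majorizes_raise[OF x'])
    fix i assume i: "i \<in> {1..\<theta>}"
    have "\<bar>(\<Sum>k<i. x' k) - (\<Sum>k<i. x k)\<bar> \<le> e x'"
      unfolding e_def using i
      by (intro member_le_sum[where f = "\<lambda>i. \<bar>(\<Sum>k<i. x' k) - (\<Sum>k<i. x k)\<bar>"]) auto
    moreover have "(\<Sum>k<i. x k) \<le> (\<Sum>k<i. y k)"
      using y(2) i by (auto simp: majorizes_def)
    ultimately show "(\<Sum>k<i. x' k) \<le> (\<Sum>k<i. y k) + e x'" by linarith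
  qed
  show ?thesis
    using close unfolding eventually_at_filter
    by (rule eventually_mono) (use le_max in \<open>meson order_less_le_trans\<close>)
qed

theorem lemma3p3:
  fixes \<theta> :: nat and \<phi> g :: "(nat \<Rightarrow> real) \<Rightarrow> real"
  assumes "\<theta> \<ge> 2"
    and "continuous_on (ordsimplex \<theta>) \<phi>"
    and "\<And>x. x \<in> ordsimplex \<theta> \<Longrightarrow>
           g x = (GREATEST v. v \<in> \<phi> ` {y \<in> ordsimplex \<theta>. majorizes \<theta> y x})"
  shows "continuous_on (ordsimplex \<theta>) g"
proof -
  have "continuous_on (ordsimplex \<theta>) (majorant_max \<theta> \<phi>)"
    unfolding continuous_on_def
  proof (intro ballI order_tendstoI)
    show "eventually (\<lambda>x'. majorant_max \<theta> \<phi> x' < a) (at x within ordsimplex \<theta>)"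
      if "majorant_max \<theta> \<phi> x < a" for x a
      using closed_superlevel_majorant_max[OF assms(2), of a] that
      by (rule eventually_less_if_closed_superlevel[where g = "majorant_max \<theta> \<phi>"])
    show "eventually (\<lambda>x'. a < majorant_max \<theta> \<phi> x') (at x within ordsimplex \<theta>)"
      if "x \<in> ordsimplex \<theta>" "a < majorant_max \<theta> \<phi> x" for x a
      using eventually_greater_majorant_max[OF assms(2) that] .
  qed
  moreover have "majorant_max \<theta> \<phi> x = g x" if "x \<in> ordsimplex \<theta>" for x
    using assms(3)[OF that] by (simp add: majorant_max_def)
  ultimately show ?thesis
    using continuous_on_cong[OF refl, of "ordsimplex \<theta>" "majorant_max \<theta> \<phi>" g] by simp
qed

end
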